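(* Let $f$ be a real Laurent polynomial whose signed support $(\mathcal A_+,\mathcal A_-)$ is full dimensional and nonseparable. If $x_*\in\operatorname{Sing}_{>0}(f)$, then $\det(\operatorname{Hess}(f)(x_* ))>0$.
   Context: A real Laurent polynomial $f(x)=\sum_{a\in\mathcal A_+}c_ax^a-\sum_{b\in\mathcal A_-}c_bx^b$ with disjoint finite $\mathcal A_+,\mathcal A_-\subseteq\mathbb Z^n$ and all $c_a,c_b>0$ has signed support $(\mathcal A_+,\mathcal A_-)$; it is full dimensional if $\dim\operatorname{conv}(\mathcal A_+\cup\mathcal A_-)=n$. $\mathcal F(\mathcal A_+)$ is the common refinement of all regular polyhedral subdivisions of $\mathcal A_+$, $\mathcal F_n(\mathcal A_+)$ its $n$-cells; $(\mathcal A_+,\mathcal A_-)$ is nonseparable if $\mathcal A_-\subseteq\operatorname{relint}\operatorname{conv}(\mathcal A_+)$ and some $D\in\mathcal F_n(\mathcal A_+)$ contains $\mathcal A_-$. $\operatorname{Sing}_{>0}(f)$ is the set of $x\in\mathbb R^n_{>0}$ with $f(x)=x_1\partial_{x_1}f(x)=\dots=x_n\partial_{x_n}f(x)=0$. $\operatorname{Hess}(f)$ is the Hessian matrix of second partial derivatives. *)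

theory Defs
  imports "HOL-Analysis.Analysis"
begin

text \<open>Exponent vectors in Z^n are represented as points of real^'n with integer coordinates.\<close>

definition lattice_pts :: "(real^'n) set \<Rightarrow> bool" where
  "lattice_pts A \<longleftrightarrow> (\<forall>a\<in>A. \<forall>i. a $ i \<in> \<int>)"

definition lmono :: "real^'n \<Rightarrow> real^'n \<Rightarrow> real" where
  "lmono a x = (\<Prod>i\<in>UNIV. (x $ i) powr (a $ i))"

definition signed_laurent :: "(real^'n) set \<Rightarrow> (real^'n) set \<Rightarrow> (real^'n \<Rightarrow> real) \<Rightarrow> real^'n \<Rightarrow> real" where
  "signed_laurent Ap Am c x = (\<Sum>a\<in>Ap. c a * lmono a x) - (\<Sum>b\<in>Am. c b * lmono b x)"

definition partial :: "'n::finite \<Rightarrow> (real^'n \<Rightarrow> real) \<Rightarrow> real^'n \<Rightarrow> real" where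
  "partial i g x = deriv (\<lambda>t. g (x + t *\<^sub>R axis i 1)) 0"

definition hessian :: "(real^'n::finite \<Rightarrow> real) \<Rightarrow> real^'n \<Rightarrow> real^'n^'n" where
  "hessian g x = (\<chi> i j. partial i (partial j g) x)"

definition Sing_pos :: "(real^'n::finite \<Rightarrow> real) \<Rightarrow> (real^'n) set" where
  "Sing_pos g = {x. (\<forall>i. 0 < x $ i) \<and> g x = 0 \<and> (\<forall>i. x $ i * partial i g x = 0)}"

text \<open>Cells (of all dimensions) of the regular polyhedral subdivision of A induced by the
  height function h: projections of the lower faces of the lifted configuration.\<close>
definition reg_cells :: "(real^'n) set \<Rightarrow> (real^'n \<Rightarrow> real) \<Rightarrow> (real^'n) set set" where
  "reg_cells A h = {convex hull {a\<in>A. h a = w \<bullet> a + c} | w c.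
      (\<forall>a\<in>A. w \<bullet> a + c \<le> h a) \<and> (\<exists>a\<in>A. h a = w \<bullet> a + c)}"

definition common_refinement :: "(real^'n) set \<Rightarrow> (real^'n) set set" where
  "common_refinement A = {(\<Inter>h. \<sigma> h) | \<sigma>. (\<forall>h. \<sigma> h \<in> reg_cells A h) \<and> (\<Inter>h. \<sigma> h) \<noteq> {}}"

definition full_cells :: "(real^'n::finite) set \<Rightarrow> (real^'n) set set" where
  "full_cells A = {D \<in> common_refinement A. aff_dim D = int CARD('n)}"

definition nonseparable :: "(real^'n::finite) set \<Rightarrow> (real^'n) set \<Rightarrow> bool" where
  "nonseparable Ap Am \<longleftrightarrow> Am \<subseteq> rel_interior (convex hull Ap) \<and> (\<exists>D\<in>full_cells Ap. Am \<subseteq> D)"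

definition full_dimensional :: "(real^'n::finite) set \<Rightarrow> (real^'n) set \<Rightarrow> bool" where
  "full_dimensional Ap Am \<longleftrightarrow> aff_dim (convex hull (Ap \<union> Am)) = int CARD('n)"

end

theory Submission
  imports Defs
begin

text \<open>Write \<open>f = \<Sum>\<^sub>a d\<^sub>a x\<^sup>a\<close> with \<open>d\<^sub>a = \<plusminus>c\<^sub>a\<close>. At a singular point \<open>x\<close> the weights
  \<open>p\<^sub>a = d\<^sub>a x\<^sup>a\<close> have vanishing zeroth and first moments, so \<open>diag(x) Hess(f)(x) diag(x)\<close> is the
  second moment matrix \<open>\<Sum>\<^sub>a p\<^sub>a a a\<^sup>T\<close>, whose quadratic form at \<open>w\<close> is
  \<open>\<Sum>\<^sub>A\<^sub>+ q\<^sub>a (w\<bullet>a)\<^sup>2 - \<Sum>\<^sub>A\<^sub>- q\<^sub>b (w\<bullet>b)\<^sup>2\<close> with \<open>q > 0\<close>.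
  Lift \<open>A\<^sub>+\<close> by the height \<open>(w\<bullet>a)\<^sup>2\<close>: by nonseparability \<open>A\<^sub>-\<close> lies in the convex hull of
  a lower face \<open>{a. (w\<bullet>a)\<^sup>2 = u\<bullet>a + c}\<close>, and convexity of \<open>(w\<bullet>z)\<^sup>2\<close> puts \<open>A\<^sub>-\<close> below the
  affine function \<open>u\<bullet>z + c\<close>, while \<open>A\<^sub>+\<close> is above it. Since both weighted point sets have the
  same moments, the affine function has the same weighted sum over both, and the difference
  is positive: strictly so either because some point of \<open>A\<^sub>+\<close> is strictly above the face, or
  because \<open>A\<^sub>-\<close> lies in the interior of \<open>conv A\<^sub>+\<close> (full dimensionality), where
  \<open>(w\<bullet>z)\<^sup>2\<close>, being strictly convex along \<open>w\<close>, is strictly below \<open>u\<bullet>z + c\<close>. Finally a positive definite matrix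
  has positive determinant, by deforming it to the identity.\<close>

definition monomial_sum :: "'k set \<Rightarrow> ('k \<Rightarrow> real) \<Rightarrow> ('k \<Rightarrow> real^'n) \<Rightarrow> real^'n \<Rightarrow> real" where
  "monomial_sum K d e y = (\<Sum>k\<in>K. d k * lmono (e k) y)"

lemma lmono_pos: "\<forall>k. 0 < y $ k \<Longrightarrow> 0 < lmono a y"
  unfolding lmono_def by (intro prod_pos) (metis powr_gt_zero less_irrefl)

lemma lmono_diff_axis:
  fixes a y :: "real^'n"
  assumes "\<forall>k. 0 < y $ k"
  shows "lmono (a - axis i 1) y = lmono a y / y $ i"
proof -
  have "(y $ k) powr ((a - axis i 1) $ k) = (y $ k) powr (a $ k) / (if k = i then y $ i else 1)" for k
    using assms[rule_format, of k] by (auto simp: axis_def powr_diff)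
  then have "lmono (a - axis i 1) y = lmono a y / (\<Prod>k\<in>UNIV. if k = i then y $ i else 1)"
    by (simp add: lmono_def prod_dividef)
  then show ?thesis by (simp add: prod.delta')
qed

lemma lmono_add_scaleR_axis:
  fixes a y :: "real^'n"
  shows "lmono a (y + t *\<^sub>R axis i 1) =
     (y $ i + t) powr (a $ i) * (\<Prod>k\<in>UNIV - {i}. (y $ k) powr (a $ k))"
proof -
  have "lmono a (y + t *\<^sub>R axis i 1) =
      ((y + t *\<^sub>R axis i 1) $ i) powr (a $ i) *
       (\<Prod>k\<in>UNIV - {i}. ((y + t *\<^sub>R axis i 1) $ k) powr (a $ k))"
    unfolding lmono_def by (rule prod.remove) auto
  also have "(\<Prod>k\<in>UNIV - {i}. ((y + t *\<^sub>R axis i 1) $ k) powr (a $ k)) =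
      (\<Prod>k\<in>UNIV - {i}. (y $ k) powr (a $ k))"
    by (rule prod.cong) (auto simp: axis_def)
  finally show ?thesis by (simp add: axis_def)
qed

lemma has_real_derivative_lmono_axis:
  fixes a y :: "real^'n"
  assumes "\<forall>k. 0 < y $ k"
  shows "((\<lambda>t. lmono a (y + t *\<^sub>R axis i 1)) has_real_derivative
    a $ i * lmono (a - axis i 1) y) (at 0)"
proof -
  let ?R = "\<Prod>k\<in>UNIV - {i}. (y $ k) powr (a $ k)"
  have "((\<lambda>t. (y $ i + t) powr (a $ i)) has_real_derivative
      (a $ i * (y $ i + 0) powr (a $ i - 1)) * 1) (at 0)"
    by (rule DERIV_chain2[OF has_real_derivative_powr])
      (use assms in \<open>auto intro!: derivative_eq_intros\<close>)
  from DERIV_cmult_right[OF this, of ?R]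
  have "((\<lambda>t. (y $ i + t) powr (a $ i) * ?R) has_real_derivative
      a $ i * ((y $ i) powr (a $ i - 1) * ?R)) (at 0)"
    by (simp add: mult.assoc)
  moreover have "lmono (a - axis i 1) y = (y $ i) powr (a $ i - 1) * ?R"
    using lmono_add_scaleR_axis[of "a - axis i 1" y 0 i] by (simp add: axis_def)
  ultimately show ?thesis by (simp add: lmono_add_scaleR_axis)
qed

lemma has_real_derivative_monomial_sum_axis:
  fixes y :: "real^'n"
  assumes "finite K" "\<forall>k. 0 < y $ k"
  shows "((\<lambda>t. monomial_sum K d e (y + t *\<^sub>R axis i 1)) has_real_derivative
     monomial_sum K (\<lambda>k. d k * e k $ i) (\<lambda>k. e k - axis i 1) y) (at 0)"
  unfolding monomial_sum_def
  by (rule DERIV_sum) (use has_real_derivative_lmono_axis[OF assms(2)] in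
      \<open>auto intro!: DERIV_cmult simp: mult.assoc\<close>)

lemma partial_monomial_sum:
  fixes y :: "real^'n"
  assumes "finite K" "\<forall>k. 0 < y $ k"
  shows "partial i (monomial_sum K d e) y = monomial_sum K (\<lambda>k. d k * e k $ i) (\<lambda>k. e k - axis i 1) y"
  unfolding partial_def using has_real_derivative_monomial_sum_axis[OF assms] by (rule DERIV_imp_deriv)

lemma partial_partial_monomial_sum:
  fixes x :: "real^'n"
  assumes "finite K" "\<forall>k. 0 < x $ k"
  shows "partial i (partial j (monomial_sum K d e)) x =
    monomial_sum K (\<lambda>k. d k * e k $ j * (e k - axis j 1) $ i) (\<lambda>k. e k - axis j 1 - axis i 1) x"
proof -
  let ?g = "monomial_sum K (\<lambda>k. d k * e k $ j) (\<lambda>k. e k - axis j 1)"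
  have "((\<lambda>t. partial j (monomial_sum K d e) (x + t *\<^sub>R axis i 1)) has_real_derivative
     monomial_sum K (\<lambda>k. d k * e k $ j * (e k - axis j 1) $ i) (\<lambda>k. e k - axis j 1 - axis i 1) x) (at 0)"
  proof (rule has_field_derivative_transform_within_open)
    show "((\<lambda>t. ?g (x + t *\<^sub>R axis i 1)) has_real_derivative
       monomial_sum K (\<lambda>k. d k * e k $ j * (e k - axis j 1) $ i) (\<lambda>k. e k - axis j 1 - axis i 1) x) (at 0)"
      using has_real_derivative_monomial_sum_axis[OF assms, of "\<lambda>k. d k * e k $ j" "\<lambda>k. e k - axis j 1" i]
      by (simp add: mult.assoc)
    show "open {- (x $ i)<..}" "0 \<in> {- (x $ i)<..}"
      using assms by auto
  next
    fix t assume "t \<in> {- (x $ i)<..}"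
    then have "\<forall>k. 0 < (x + t *\<^sub>R axis i 1) $ k"
      using assms by (auto simp: axis_def)
    then show "?g (x + t *\<^sub>R axis i 1) = partial j (monomial_sum K d e) (x + t *\<^sub>R axis i 1)"
      by (simp add: partial_monomial_sum[OF assms(1)])
  qed
  then show ?thesis unfolding partial_def[of i] by (rule DERIV_imp_deriv)
qed

lemma scaled_partial_monomial_sum:
  fixes x :: "real^'n"
  assumes "finite K" "\<forall>k. 0 < x $ k"
  shows "x $ j * partial j (monomial_sum K d (\<lambda>a. a)) x = (\<Sum>a\<in>K. d a * lmono a x * a $ j)"
proof -
  have "x $ j \<noteq> 0" using assms(2) by (metis less_irrefl)
  then show ?thesis
    by (simp add: partial_monomial_sum[OF assms] monomial_sum_def lmono_diff_axis[OF assms(2)]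
        sum_distrib_left field_simps)
qed

lemma scaled_hessian_monomial_sum:
  fixes x :: "real^'n"
  assumes "finite K" "\<forall>k. 0 < x $ k"
  shows "x $ i * x $ j * hessian (monomial_sum K d (\<lambda>a. a)) x $ i $ j =
    (\<Sum>a\<in>K. d a * lmono a x * a $ i * a $ j) - (if i = j then \<Sum>a\<in>K. d a * lmono a x * a $ j else 0)"
proof -
  have nz: "x $ k \<noteq> 0" for k using assms(2) by (metis less_irrefl)
  have "lmono (a - axis j 1 - axis i 1) x = lmono a x / (x $ i * x $ j)" for a
    using nz by (simp add: lmono_diff_axis[OF assms(2)])
  then have "x $ i * x $ j * hessian (monomial_sum K d (\<lambda>a. a)) x $ i $ j =
      (\<Sum>a\<in>K. d a * lmono a x * a $ j * (a $ i - (if i = j then 1 else 0)))"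
    using nz by (simp add: hessian_def partial_partial_monomial_sum[OF assms] monomial_sum_def
        sum_distrib_left axis_def) (auto simp: mult_ac)
  also have "\<dots> = (\<Sum>a\<in>K. d a * lmono a x * a $ i * a $ j) -
      (if i = j then \<Sum>a\<in>K. d a * lmono a x * a $ j else 0)"
    by (cases "i = j") (simp_all add: algebra_simps sum_subtractf)
  finally show ?thesis .
qed

lemma hessian_quadratic_form_monomial_sum:
  fixes x v :: "real^'n"
  assumes "finite K" "\<forall>k. 0 < x $ k"
    and "\<forall>j. x $ j * partial j (monomial_sum K d (\<lambda>a. a)) x = 0"
  shows "v \<bullet> (hessian (monomial_sum K d (\<lambda>a. a)) x *v v) =
    (\<Sum>a\<in>K. d a * lmono a x * ((\<chi> i. v $ i / x $ i) \<bullet> a)^2)"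
proof -
  let ?H = "hessian (monomial_sum K d (\<lambda>a. a)) x" and ?p = "\<lambda>a. d a * lmono a x"
  have nz: "x $ k \<noteq> 0" for k using assms(2) by (metis less_irrefl)
  have moment: "(\<Sum>a\<in>K. ?p a * a $ j) = 0" for j
    using assms(3) scaled_partial_monomial_sum[OF assms(1,2)] by simp
  have "x $ i * x $ j * ?H $ i $ j = (\<Sum>a\<in>K. ?p a * a $ i * a $ j)" for i j
    unfolding scaled_hessian_monomial_sum[OF assms(1,2)] moment by simp
  then have H: "?H $ i $ j = (\<Sum>a\<in>K. ?p a * a $ i * a $ j) / (x $ i * x $ j)" for i j
    using nz by (simp add: field_simps)
  have "v \<bullet> (?H *v v) = (\<Sum>i\<in>UNIV. \<Sum>j\<in>UNIV. v $ i * ?H $ i $ j * v $ j)"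
    by (simp add: inner_vec_def matrix_vector_mult_def sum_distrib_left mult.assoc)
  also have "\<dots> = (\<Sum>i\<in>UNIV. \<Sum>j\<in>UNIV. \<Sum>a\<in>K. ?p a * (a $ i * (v $ i / x $ i)) * (a $ j * (v $ j / x $ j)))"
    by (intro sum.cong refl)
      (simp add: H sum_distrib_left sum_distrib_right sum_divide_distrib mult_ac)
  also have "\<dots> = (\<Sum>a\<in>K. ?p a * ((\<chi> i. v $ i / x $ i) \<bullet> a)^2)"
    by (simp add: inner_vec_def power2_eq_square sum_product sum_distrib_left
        mult.commute mult.left_commute mult.assoc sum.swap[of _ K])
  finally show ?thesis .
qed

definition signed_coeff :: "'a set \<Rightarrow> ('a \<Rightarrow> real) \<Rightarrow> 'a \<Rightarrow> real" where
  "signed_coeff Ap c a = (if a \<in> Ap then c a else - c a)"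

lemma sum_signed_coeff:
  assumes "finite Ap" "finite Am" "Ap \<inter> Am = {}"
  shows "(\<Sum>a\<in>Ap \<union> Am. signed_coeff Ap c a * f a) = (\<Sum>a\<in>Ap. c a * f a) - (\<Sum>a\<in>Am. c a * f a)"
proof -
  have "(\<Sum>a\<in>Am. signed_coeff Ap c a * f a) = - (\<Sum>a\<in>Am. c a * f a)"
    using assms(3) by (auto simp: signed_coeff_def simp flip: sum_negf intro!: sum.cong)
  moreover have "(\<Sum>a\<in>Ap. signed_coeff Ap c a * f a) = (\<Sum>a\<in>Ap. c a * f a)"
    by (simp add: signed_coeff_def)
  ultimately show ?thesis
    using assms by (simp add: sum.union_disjoint)
qed

lemma signed_laurent_eq_monomial_sum:
  assumes "finite Ap" "finite Am" "Ap \<inter> Am = {}"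
  shows "signed_laurent Ap Am c = monomial_sum (Ap \<union> Am) (signed_coeff Ap c) (\<lambda>a. a)"
  by (rule ext) (simp add: signed_laurent_def monomial_sum_def sum_signed_coeff[OF assms])

lemma signed_laurent_singular_moments:
  assumes "finite Ap" "finite Am" "Ap \<inter> Am = {}" "x \<in> Sing_pos (signed_laurent Ap Am c)"
  shows "(\<Sum>a\<in>Ap. c a * lmono a x) = (\<Sum>b\<in>Am. c b * lmono b x)"
    and "\<forall>j. (\<Sum>a\<in>Ap. c a * lmono a x * a $ j) = (\<Sum>b\<in>Am. c b * lmono b x * b $ j)"
proof -
  have x_pos: "\<forall>k. 0 < x $ k" and "signed_laurent Ap Am c x = 0"
    and crit: "\<forall>j. x $ j * partial j (signed_laurent Ap Am c) x = 0"
    using assms(4) unfolding Sing_pos_def by auto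
  then show "(\<Sum>a\<in>Ap. c a * lmono a x) = (\<Sum>b\<in>Am. c b * lmono b x)"
    by (simp add: signed_laurent_def)
  have "finite (Ap \<union> Am)"
    using assms(1,2) by simp
  from crit scaled_partial_monomial_sum[OF this x_pos] sum_signed_coeff[OF assms(1-3)]
  show "\<forall>j. (\<Sum>a\<in>Ap. c a * lmono a x * a $ j) = (\<Sum>b\<in>Am. c b * lmono b x * b $ j)"
    by (simp add: signed_laurent_eq_monomial_sum[OF assms(1-3)] mult.assoc)
qed

lemma hessian_quadratic_form_signed_laurent:
  assumes "finite Ap" "finite Am" "Ap \<inter> Am = {}" "x \<in> Sing_pos (signed_laurent Ap Am c)"
  shows "v \<bullet> (hessian (signed_laurent Ap Am c) x *v v) =
    (\<Sum>a\<in>Ap. c a * lmono a x * ((\<chi> i. v $ i / x $ i) \<bullet> a)^2) -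
    (\<Sum>b\<in>Am. c b * lmono b x * ((\<chi> i. v $ i / x $ i) \<bullet> b)^2)"
proof -
  note f_eq = signed_laurent_eq_monomial_sum[OF assms(1-3)]
  have "finite (Ap \<union> Am)"
    using assms(1,2) by simp
  moreover have "\<forall>k. 0 < x $ k"
    and "\<forall>j. x $ j * partial j (monomial_sum (Ap \<union> Am) (signed_coeff Ap c) (\<lambda>a. a)) x = 0"
    using assms(4) unfolding Sing_pos_def f_eq by auto
  ultimately show ?thesis
    using hessian_quadratic_form_monomial_sum[of "Ap \<union> Am" x "signed_coeff Ap c" v]
      sum_signed_coeff[OF assms(1-3)]
    by (simp add: f_eq mult.assoc)
qed

lemma convex_on_square_inner_minus_inner:
  fixes w u :: "'a::real_inner"
  shows "convex_on UNIV (\<lambda>z. (w \<bullet> z)^2 - u \<bullet> z)"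
proof (rule convex_onI)
  fix t :: real and x y :: 'a
  assume "0 < t" "t < 1"
  then have "((1 - t) * (w \<bullet> x) + t * (w \<bullet> y))^2 \<le> (1 - t) * (w \<bullet> x)^2 + t * (w \<bullet> y)^2"
    using convex_onD[OF convex_power2, of t "w \<bullet> x" "w \<bullet> y"] by simp
  then show "(w \<bullet> ((1 - t) *\<^sub>R x + t *\<^sub>R y))^2 - u \<bullet> ((1 - t) *\<^sub>R x + t *\<^sub>R y)
      \<le> (1 - t) * ((w \<bullet> x)^2 - u \<bullet> x) + t * ((w \<bullet> y)^2 - u \<bullet> y)"
    by (simp add: algebra_simps)
qed simp

lemma square_inner_le_affine_on_convex_hull:
  fixes w u :: "'a::real_inner"
  assumes "\<forall>z\<in>S. (w \<bullet> z)^2 \<le> u \<bullet> z + c" "y \<in> convex hull S"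
  shows "(w \<bullet> y)^2 \<le> u \<bullet> y + c"
proof -
  have "convex_on (convex hull S) (\<lambda>z. (w \<bullet> z)^2 - u \<bullet> z)"
    by (rule convex_on_subset[OF convex_on_square_inner_minus_inner]) auto
  from convex_on_convex_hull_bound[OF this, of c] assms show ?thesis
    by (auto simp: algebra_simps)
qed

lemma square_inner_less_affine_at_interior:
  fixes w u :: "'a::real_inner"
  assumes "\<forall>z\<in>S. (w \<bullet> z)^2 \<le> u \<bullet> z + c" "b \<in> interior S" "w \<noteq> 0"
  shows "(w \<bullet> b)^2 < u \<bullet> b + c"
proof -
  obtain e where "e > 0" "ball b e \<subseteq> S"
    using assms(2) mem_interior by blast
  define t where "t = e / (2 * norm w)"
  have "t > 0" "norm (t *\<^sub>R w) < e"
    using \<open>e > 0\<close> assms(3) by (auto simp: t_def)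
  then have "b + t *\<^sub>R w \<in> S" "b - t *\<^sub>R w \<in> S"
    using \<open>ball b e \<subseteq> S\<close> by (auto simp: dist_norm)
  then have "(w \<bullet> b + t * (w \<bullet> w))^2 \<le> u \<bullet> b + t * (u \<bullet> w) + c"
    and "(w \<bullet> b - t * (w \<bullet> w))^2 \<le> u \<bullet> b - t * (u \<bullet> w) + c"
    using assms(1)[rule_format, of "b + t *\<^sub>R w"] assms(1)[rule_format, of "b - t *\<^sub>R w"]
    by (simp_all add: inner_add_right inner_diff_right)
  moreover have "(w \<bullet> b + t * (w \<bullet> w))^2 + (w \<bullet> b - t * (w \<bullet> w))^2 =
      2 * (w \<bullet> b)^2 + 2 * (t * (w \<bullet> w))^2"
    by (simp add: power2_eq_square algebra_simps)
  moreover have "(t * (w \<bullet> w))^2 > 0"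
    using \<open>t > 0\<close> assms(3) by simp
  ultimately show ?thesis by linarith
qed

lemma weighted_sum_affine_eq:
  fixes Ap Am :: "(real^'n) set"
  assumes "(\<Sum>a\<in>Ap. q a) = (\<Sum>b\<in>Am. q b)"
    and "\<forall>j. (\<Sum>a\<in>Ap. q a * a $ j) = (\<Sum>b\<in>Am. q b * b $ j)"
  shows "(\<Sum>a\<in>Ap. q a * (u \<bullet> a + c)) = (\<Sum>b\<in>Am. q b * (u \<bullet> b + c))"
proof -
  have "(\<Sum>a\<in>A. q a * (u \<bullet> a + c)) = (\<Sum>j\<in>UNIV. u $ j * (\<Sum>a\<in>A. q a * a $ j)) + c * (\<Sum>a\<in>A. q a)"
    for A :: "(real^'n) set"
    by (simp add: inner_vec_def algebra_simps sum.distrib sum_distrib_left sum.swap[of _ A])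
  then show ?thesis using assms by simp
qed

lemma nonseparable_lower_face:
  assumes "nonseparable Ap Am"
  obtains u c where "\<forall>a\<in>Ap. u \<bullet> a + c \<le> h a" "Am \<subseteq> convex hull {a\<in>Ap. h a = u \<bullet> a + c}"
proof -
  obtain D where "D \<in> full_cells Ap" "Am \<subseteq> D"
    using assms unfolding nonseparable_def by blast
  then obtain \<sigma> where "D = (\<Inter>h. \<sigma> h)" "\<forall>h. \<sigma> h \<in> reg_cells Ap h"
    unfolding full_cells_def common_refinement_def by blast
  then have "Am \<subseteq> \<sigma> h" "\<sigma> h \<in> reg_cells Ap h"
    using \<open>Am \<subseteq> D\<close> by blast+
  then show ?thesis
    using that unfolding reg_cells_def by blast
qed

lemma nonseparable_full_dimensional_interior:
  assumes "full_dimensional Ap Am" "nonseparable Ap Am"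
  shows "Am \<subseteq> interior (convex hull Ap)"
proof -
  have ri: "Am \<subseteq> rel_interior (convex hull Ap)"
    using assms(2) unfolding nonseparable_def by blast
  then have "convex hull (Ap \<union> Am) \<subseteq> convex hull Ap"
    using rel_interior_subset hull_subset[of Ap convex]
    by (intro hull_minimal) auto
  then have "convex hull (Ap \<union> Am) = convex hull Ap"
    by (simp add: hull_mono subset_antisym)
  then have "affine hull (convex hull Ap) = UNIV"
    using assms(1) aff_dim_eq_full unfolding full_dimensional_def by fastforce
  with ri show ?thesis
    by (simp add: rel_interior_interior)
qed

lemma weighted_sum_square_inner_less:
  fixes Ap Am :: "(real^'n) set" and w :: "real^'n"
  assumes "finite Ap" "finite Am" and q_pos: "\<forall>a\<in>Ap \<union> Am. 0 < q a"
    and moment0: "(\<Sum>a\<in>Ap. q a) = (\<Sum>b\<in>Am. q b)"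
    and moment1: "\<forall>j. (\<Sum>a\<in>Ap. q a * a $ j) = (\<Sum>b\<in>Am. q b * b $ j)"
    and "full_dimensional Ap Am" "nonseparable Ap Am" "w \<noteq> 0"
  shows "(\<Sum>b\<in>Am. q b * (w \<bullet> b)^2) < (\<Sum>a\<in>Ap. q a * (w \<bullet> a)^2)"
proof -
  obtain u c where above: "\<forall>a\<in>Ap. u \<bullet> a + c \<le> (w \<bullet> a)^2"
    and face: "Am \<subseteq> convex hull {a\<in>Ap. (w \<bullet> a)^2 = u \<bullet> a + c}"
    by (rule nonseparable_lower_face[OF assms(7), of "\<lambda>a. (w \<bullet> a)^2"])
  have below: "(w \<bullet> b)^2 \<le> u \<bullet> b + c" if "b \<in> Am" for b
    by (rule square_inner_le_affine_on_convex_hull[of "{a\<in>Ap. (w \<bullet> a)^2 = u \<bullet> a + c}"])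
      (use face that in auto)
  have affine_eq: "(\<Sum>a\<in>Ap. q a * (u \<bullet> a + c)) = (\<Sum>b\<in>Am. q b * (u \<bullet> b + c))"
    using weighted_sum_affine_eq[OF moment0 moment1] .
  have Am_le: "(\<Sum>b\<in>Am. q b * (w \<bullet> b)^2) \<le> (\<Sum>b\<in>Am. q b * (u \<bullet> b + c))"
    by (rule sum_mono) (use below q_pos in \<open>auto intro!: mult_left_mono\<close>)
  show ?thesis
  proof (cases "\<exists>a\<in>Ap. u \<bullet> a + c < (w \<bullet> a)^2")
    case True
    have "(\<Sum>a\<in>Ap. q a * (u \<bullet> a + c)) < (\<Sum>a\<in>Ap. q a * (w \<bullet> a)^2)"
      by (rule sum_strict_mono_ex1)
        (use assms(1) True above q_pos in \<open>auto intro!: mult_left_mono mult_strict_left_mono\<close>)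
    with Am_le affine_eq show ?thesis by linarith
  next
    case False
    then have on_face: "\<forall>a\<in>Ap. (w \<bullet> a)^2 = u \<bullet> a + c"
      using above by force
    have "(w \<bullet> z)^2 \<le> u \<bullet> z + c" if "z \<in> convex hull Ap" for z
      using square_inner_le_affine_on_convex_hull[OF _ that] on_face by simp
    then have strict: "(w \<bullet> b)^2 < u \<bullet> b + c" if "b \<in> Am" for b
      using nonseparable_full_dimensional_interior[OF assms(6,7)] assms(8) that
      by (intro square_inner_less_affine_at_interior[of "convex hull Ap"]) auto
    have "Am \<noteq> {}"
    proof
      assume "Am = {}"
      then have "Ap = {}"
        using moment0 sum_pos[of Ap q] assms(1) q_pos by force
      with \<open>Am = {}\<close> assms(6) show False
        unfolding full_dimensional_def by simp
    qed
    then obtain b0 where "b0 \<in> Am" by blast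
    have "(\<Sum>b\<in>Am. q b * (w \<bullet> b)^2) < (\<Sum>b\<in>Am. q b * (u \<bullet> b + c))"
      by (rule sum_strict_mono_ex1)
        (use assms(2) \<open>b0 \<in> Am\<close> strict below q_pos in \<open>auto intro!: mult_left_mono mult_strict_left_mono\<close>)
    with affine_eq on_face show ?thesis by simp
  qed
qed

lemma det_pos_if_positive_definite:
  fixes M :: "real^'n^'n"
  assumes "\<And>v. v \<noteq> 0 \<Longrightarrow> 0 < v \<bullet> (M *v v)"
  shows "0 < det M"
proof (rule ccontr)
  let ?N = "\<lambda>t::real. mat 1 + t *\<^sub>R (M - mat 1)"
  assume "\<not> 0 < det M"
  then have "det (?N 1) \<le> 0" "0 \<le> det (?N 0)"
    by simp_all
  moreover have "continuous_on {0..1} (\<lambda>t. det (?N t))"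
    unfolding det_def by (intro continuous_intros)
  ultimately obtain t where t: "0 \<le> t" "t \<le> 1" "det (?N t) = 0"
    using IVT2'[of "\<lambda>t. det (?N t)" 1 0 0] by auto
  then have "rank (?N t) \<noteq> CARD('n)"
    by (simp add: det_eq_0_rank)
  then obtain v where "v \<noteq> 0" "?N t *v v = 0"
    using matrix_nonfull_linear_equations_eq by blast
  have "v \<bullet> (?N t *v v) = (1 - t) * (v \<bullet> v) + t * (v \<bullet> (M *v v))"
    by (simp add: scaleR_matrix_vector_assoc[symmetric] algebra_simps)
  also have "\<dots> > 0"
  proof (cases "t = 1")
    case False
    with t \<open>v \<noteq> 0\<close> have "0 < (1 - t) * (v \<bullet> v)"
      by simp
    moreover have "0 \<le> t * (v \<bullet> (M *v v))"
      using t(1) assms[OF \<open>v \<noteq> 0\<close>] by simp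
    ultimately show ?thesis by linarith
  qed (use assms \<open>v \<noteq> 0\<close> in simp)
  finally show False
    using \<open>?N t *v v = 0\<close> by simp
qed

theorem lemma4p3:
  fixes Ap Am :: "(real^'n) set" and c :: "real^'n \<Rightarrow> real" and xs :: "real^'n"
  assumes "finite Ap" "finite Am" "Ap \<inter> Am = {}"
    and "lattice_pts Ap" "lattice_pts Am"
    and "\<forall>a\<in>Ap \<union> Am. 0 < c a"
    and "full_dimensional Ap Am"
    and "nonseparable Ap Am"
    and "xs \<in> Sing_pos (signed_laurent Ap Am c)"
  shows "det (hessian (signed_laurent Ap Am c) xs) > 0"
proof (rule det_pos_if_positive_definite)
  fix v :: "real^'n"
  assume "v \<noteq> 0"
  have xs_pos: "\<forall>k. 0 < xs $ k"
    using assms(9) unfolding Sing_pos_def by auto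
  then have "(\<chi> i. v $ i / xs $ i) \<noteq> 0"
    using \<open>v \<noteq> 0\<close> by (auto simp: vec_eq_iff) (metis less_irrefl)
  moreover have "\<forall>a\<in>Ap \<union> Am. 0 < c a * lmono a xs"
    using assms(6) lmono_pos[OF xs_pos] by simp
  ultimately show "0 < v \<bullet> (hessian (signed_laurent Ap Am c) xs *v v)"
    using weighted_sum_square_inner_less[OF assms(1,2) _
        signed_laurent_singular_moments[OF assms(1-3,9)] assms(7,8)]
    unfolding hessian_quadratic_form_signed_laurent[OF assms(1-3,9)]
    by simp
qed

end
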